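(* Assume (P). Let $T>0$ and $u\in C([0,T]\times\mathbb{R}^d)$ be such that $\|u(t,\cdot)-u(0,\cdot)\|_\infty\to0$ as $t\to0^+$ and $\sup_{t\in[0,T]}\|u(t,\cdot)\mathbf{1}_{\{|\cdot|\ge r\}}\|_\infty\to0$ as $r\to\infty$. Assume that for all $(t,x)\in(0,T]\times\mathbb{R}^d$, $\partial_tu(t,x)$ exists, $\mathcal{L}^{\kappa,0^+}_xu(t,x)$ is well defined, and $\partial_tu(t,x)=\mathcal{L}^{\kappa,0^+}_xu(t,x)$. If $\sup_{x\in\mathbb{R}^d}u(0,x)\ge0$, then $\sup_{x\in\mathbb{R}^d}u(t,x)\le\sup_{x\in\mathbb{R}^d}u(0,x)$ for every $t\in(0,T]$. Consequently, two such functions $u_1,u_2$ with $u_1(0,\cdot)=u_2(0,\cdot)$ coincide on $[0,T]\times\mathbb{R}^d$.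
   Context: Let $d\in\mathbb{N}$ and let $\nu:[0,\infty)\to[0,\infty]$ be non-increasing with $\int_{\mathbb{R}^d}(1\wedge|x|^2)\nu(|x|)\,dx<\infty$. Let $J:\mathbb{R}^d\to[0,\infty]$ be Borel with $\Lambda^{-1}\nu(|x|)\le J(x)\le\Lambda\nu(|x|)$ for all $x$, for some $\Lambda\ge1$. Let $\kappa:\mathbb{R}^d\times\mathbb{R}^d\to\mathbb{R}$ be Borel with $0<\kappa_0\le\kappa(x,z)\le\kappa_1$ and $|\kappa(x,z)-\kappa(y,z)|\le\kappa_2|x-y|^{\beta}$ for all $x,y,z$, where $\beta\in(0,1)$. For $r>0$ let $h(r)=\int_{\mathbb{R}^d}\big(1\wedge \tfrac{|x|^2}{r^2}\big)\nu(|x|)\,dx$. (WLSC): there are $\alpha_h\in(0,2]$, $C_h\ge1$ with $h(r)\le C_h\lambda^{\alpha_h}h(\lambda r)$ for all $\lambda\le1$, $r\le1$. (WUSC): there are $\beta_h\in(0,2]$, $c_h\in(0,1]$ with $h(r)\ge c_h\lambda^{\beta_h}h(\lambda r)$ for all $\lambda\le1$, $r\le1$. Case (P1): WLSC holds with $1<\alpha_h\le2$. Case (P2): WLSC and WUSC hold with $0<\alpha_h\le\beta_h<1$. Case (P3): WLSC holds, $J(z)=J(-z)$ and $\kappa(x,z)=\kappa(x,-z)$ for all $x,z$. "(P)" means one of (P1), (P2), (P3) holds. In the cases (P1), (P2), (P3) respectively, the operator is $\mathcal{L}^{\kappa}f(x)=\int_{\mathbb{R}^d}(f(x+z)-f(x)-\mathbf{1}_{|z|<1}\langle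 z,\nabla f(x)\rangle)\kappa(x,z)J(z)\,dz$, $\mathcal{L}^{\kappa}f(x)=\int_{\mathbb{R}^d}(f(x+z)-f(x))\kappa(x,z)J(z)\,dz$, $\mathcal{L}^{\kappa}f(x)=\tfrac12\int_{\mathbb{R}^d}(f(x+z)+f(x-z)-2f(x))\kappa(x,z)J(z)\,dz$. For $\varepsilon\in[0,1]$, $\mathcal{L}^{\kappa,\varepsilon}$ denotes the same expression with $J(z)$ replaced by $J(z)\mathbf{1}_{|z|>\varepsilon}$; $\mathcal{L}^{\kappa,\varepsilon}f(x)$ is well defined if the integral converges absolutely and, in case (P1), $\nabla f(x)$ exists. The weak operator is $\mathcal{L}^{\kappa,0^+}f(x):=\lim_{\varepsilon\to0^+}\mathcal{L}^{\kappa,\varepsilon}f(x)$, well defined when $\mathcal{L}^{\kappa,\varepsilon}f$ is well defined for all $\varepsilon\in(0,1]$ and the limit exists. A subscript $x$ indicates action in the variable $x$. *)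

theory Defs
  imports "HOL-Analysis.Analysis"
begin

datatype pcase = P1 | P2 | P3

definition hfun :: "(real \<Rightarrow> ennreal) \<Rightarrow> 'a::euclidean_space itself \<Rightarrow> real \<Rightarrow> ennreal" where
  "hfun \<nu> TYPE('a) r =
     (\<integral>\<^sup>+ x. ennreal (min 1 (norm (x::'a)^2 / r^2)) * \<nu> (norm x) \<partial>lborel)"

definition WLSC :: "(real \<Rightarrow> ennreal) \<Rightarrow> 'a::euclidean_space itself \<Rightarrow> real \<Rightarrow> real \<Rightarrow> bool" where
  "WLSC \<nu> ty \<alpha> C \<longleftrightarrow> 0 < \<alpha> \<and> \<alpha> \<le> 2 \<and> 1 \<le> C \<and>
     (\<forall>l r. 0 < l \<longrightarrow> l \<le> 1 \<longrightarrow> 0 < r \<longrightarrow> r \<le> 1 \<longrightarrow>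
        hfun \<nu> ty r \<le> ennreal (C * l powr \<alpha>) * hfun \<nu> ty (l * r))"

definition WUSC :: "(real \<Rightarrow> ennreal) \<Rightarrow> 'a::euclidean_space itself \<Rightarrow> real \<Rightarrow> real \<Rightarrow> bool" where
  "WUSC \<nu> ty \<beta> c \<longleftrightarrow> 0 < \<beta> \<and> \<beta> \<le> 2 \<and> 0 < c \<and> c \<le> 1 \<and>
     (\<forall>l r. 0 < l \<longrightarrow> l \<le> 1 \<longrightarrow> 0 < r \<longrightarrow> r \<le> 1 \<longrightarrow>
        hfun \<nu> ty r \<ge> ennreal (c * l powr \<beta>) * hfun \<nu> ty (l * r))"

definition case_hyp :: "pcase \<Rightarrow> (real \<Rightarrow> ennreal) \<Rightarrow> ('a::euclidean_space \<Rightarrow> ennreal)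
    \<Rightarrow> ('a \<Rightarrow> 'a \<Rightarrow> real) \<Rightarrow> bool" where
  "case_hyp c \<nu> J \<kappa> = (case c of
      P1 \<Rightarrow> (\<exists>\<alpha> C. WLSC \<nu> TYPE('a) \<alpha> C \<and> 1 < \<alpha>)
    | P2 \<Rightarrow> (\<exists>\<alpha> C \<beta> c. WLSC \<nu> TYPE('a) \<alpha> C \<and> WUSC \<nu> TYPE('a) \<beta> c \<and> \<alpha> \<le> \<beta> \<and> \<beta> < 1)
    | P3 \<Rightarrow> (\<exists>\<alpha> C. WLSC \<nu> TYPE('a) \<alpha> C) \<and> (\<forall>z. J z = J (-z)) \<and> (\<forall>x z. \<kappa> x z = \<kappa> x (-z)))"

text \<open>Integrand of the truncated operator L^{kappa,eps} (jump kernel J(z) 1_{|z|>eps}).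
  In case (P1) the gradient term <z, grad f(x)> is the Frechet derivative of f at x applied to z.\<close>
definition Lintegrand :: "pcase \<Rightarrow> ('a::euclidean_space \<Rightarrow> 'a \<Rightarrow> real) \<Rightarrow> ('a \<Rightarrow> ennreal)
    \<Rightarrow> real \<Rightarrow> ('a \<Rightarrow> real) \<Rightarrow> 'a \<Rightarrow> 'a \<Rightarrow> real" where
  "Lintegrand c \<kappa> J \<epsilon> f x z =
     (case c of
        P1 \<Rightarrow> f (x + z) - f x - (if norm z < 1 then frechet_derivative f (at x) z else 0)
      | P2 \<Rightarrow> f (x + z) - f x
      | P3 \<Rightarrow> (1/2) * (f (x + z) + f (x - z) - 2 * f x))
     * \<kappa> x z * enn2real (J z) * indicator {z. norm z > \<epsilon>} z"

definition Lop :: "pcase \<Rightarrow> ('a::euclidean_space \<Rightarrow> 'a \<Rightarrow> real) \<Rightarrow> ('a \<Rightarrow> ennreal)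
    \<Rightarrow> real \<Rightarrow> ('a \<Rightarrow> real) \<Rightarrow> 'a \<Rightarrow> real" where
  "Lop c \<kappa> J \<epsilon> f x = (\<integral> z. Lintegrand c \<kappa> J \<epsilon> f x z \<partial>lborel)"

definition Lop_wd :: "pcase \<Rightarrow> ('a::euclidean_space \<Rightarrow> 'a \<Rightarrow> real) \<Rightarrow> ('a \<Rightarrow> ennreal)
    \<Rightarrow> real \<Rightarrow> ('a \<Rightarrow> real) \<Rightarrow> 'a \<Rightarrow> bool" where
  "Lop_wd c \<kappa> J \<epsilon> f x \<longleftrightarrow> integrable lborel (Lintegrand c \<kappa> J \<epsilon> f x) \<and>
     (c = P1 \<longrightarrow> f differentiable (at x))"

definition Lweak_wd :: "pcase \<Rightarrow> ('a::euclidean_space \<Rightarrow> 'a \<Rightarrow> real) \<Rightarrow> ('a \<Rightarrow> ennreal)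
    \<Rightarrow> ('a \<Rightarrow> real) \<Rightarrow> 'a \<Rightarrow> bool" where
  "Lweak_wd c \<kappa> J f x \<longleftrightarrow> (\<forall>\<epsilon>. 0 < \<epsilon> \<and> \<epsilon> \<le> 1 \<longrightarrow> Lop_wd c \<kappa> J \<epsilon> f x) \<and>
     (\<exists>l. ((\<lambda>\<epsilon>. Lop c \<kappa> J \<epsilon> f x) \<longlongrightarrow> l) (at_right 0))"

definition Lweak :: "pcase \<Rightarrow> ('a::euclidean_space \<Rightarrow> 'a \<Rightarrow> real) \<Rightarrow> ('a \<Rightarrow> ennreal)
    \<Rightarrow> ('a \<Rightarrow> real) \<Rightarrow> 'a \<Rightarrow> real" where
  "Lweak c \<kappa> J f x = Lim (at_right 0) (\<lambda>\<epsilon>. Lop c \<kappa> J \<epsilon> f x)"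

definition is_solution :: "pcase \<Rightarrow> ('a::euclidean_space \<Rightarrow> 'a \<Rightarrow> real) \<Rightarrow> ('a \<Rightarrow> ennreal)
    \<Rightarrow> real \<Rightarrow> (real \<Rightarrow> 'a \<Rightarrow> real) \<Rightarrow> bool" where
  "is_solution c \<kappa> J T u \<longleftrightarrow>
     continuous_on ({0..T} \<times> UNIV) (\<lambda>(t, x). u t x) \<and>
     (\<forall>e>0. \<exists>\<delta>>0. \<forall>t. 0 < t \<and> t < \<delta> \<longrightarrow> (\<forall>x. \<bar>u t x - u 0 x\<bar> \<le> e)) \<and>
     (\<forall>e>0. \<exists>R. \<forall>t\<in>{0..T}. \<forall>x. R \<le> norm x \<longrightarrow> \<bar>u t x\<bar> \<le> e) \<and>
     (\<forall>t\<in>{0<..T}. \<forall>x. Lweak_wd c \<kappa> J (u t) x \<and>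
         ((\<lambda>s. u s x) has_real_derivative Lweak c \<kappa> J (u t) x) (at t within {0..T}))"

end

theory Submission
  imports Defs
begin

text \<open>At a spatial maximum of \<open>u(t,\<cdot>)\<close> every truncated operator is \<open>\<le> 0\<close> (only \<open>\<kappa> \<ge> 0\<close> is
  needed), hence so is the weak operator, and therefore \<open>\<partial>\<^sub>tu \<le> 0\<close> there. If \<open>u(t,x\<^sub>0)\<close> exceeded
  \<open>M = sup u(0,\<cdot>) \<ge> 0\<close>, the penalized function \<open>u(r,x) - \<eta> r\<close> with small \<open>\<eta> > 0\<close> would still
  exceed \<open>M\<close> at \<open>(t,x\<^sub>0)\<close>; by the decay at infinity it attains its maximum over
  \<open>[0,t] \<times> \<real>\<^sup>d\<close> at some \<open>(s,y)\<close> with \<open>s > 0\<close>, where the left difference quotients force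
  \<open>\<partial>\<^sub>tu(s,y) \<ge> \<eta> > 0\<close>, a contradiction. Uniqueness follows by applying this to \<open>\<pm>(u\<^sub>1 - u\<^sub>2)\<close>,
  which is again a solution since the operator is linear.\<close>

lemma Lintegrand_nonpos_at_max:
  assumes max: "\<And>y. f y \<le> f x" and diff: "c = P1 \<Longrightarrow> f differentiable (at x)"
    and \<kappa>_nonneg: "\<And>x z. 0 \<le> \<kappa> x z"
  shows "Lintegrand c \<kappa> J \<epsilon> f x z \<le> 0"
proof -
  have "(case c of
        P1 \<Rightarrow> f (x + z) - f x - (if norm z < 1 then frechet_derivative f (at x) z else 0)
      | P2 \<Rightarrow> f (x + z) - f x
      | P3 \<Rightarrow> (1/2) * (f (x + z) + f (x - z) - 2 * f x)) \<le> 0"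
  proof (cases c)
    case P1
    have "frechet_derivative f (at x) = (\<lambda>v. 0)"
      by (rule differential_zero_maxmin[of x UNIV f])
        (use diff P1 max frechet_derivative_works in auto)
    then show ?thesis using P1 max[of "x + z"] by simp
  next
    case P2 then show ?thesis using max[of "x + z"] by simp
  next
    case P3 then show ?thesis using max[of "x + z"] max[of "x - z"] by simp
  qed
  then show ?thesis unfolding Lintegrand_def
    by (intro mult_nonpos_nonneg \<kappa>_nonneg enn2real_nonneg) auto
qed

lemma Lop_nonpos_at_max:
  assumes "\<And>y. f y \<le> f x" "c = P1 \<Longrightarrow> f differentiable (at x)" "\<And>x z. 0 \<le> \<kappa> x z"
  shows "Lop c \<kappa> J \<epsilon> f x \<le> 0"
proof -
  have "0 \<le> (\<integral> z. - Lintegrand c \<kappa> J \<epsilon> f x z \<partial>lborel)"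
    using Lintegrand_nonpos_at_max[OF assms] by (intro integral_nonneg_AE) auto
  then show ?thesis unfolding Lop_def by simp
qed

lemma Lweak_eq_limit:
  assumes "((\<lambda>\<epsilon>. Lop c \<kappa> J \<epsilon> f x) \<longlongrightarrow> l) (at_right 0)"
  shows "Lweak c \<kappa> J f x = l"
  unfolding Lweak_def using assms by (simp add: tendsto_Lim)

lemma Lweak_nonpos_at_max:
  assumes wd: "Lweak_wd c \<kappa> J f x" and max: "\<And>y. f y \<le> f x"
    and \<kappa>_nonneg: "\<And>x z. 0 \<le> \<kappa> x z"
  shows "Lweak c \<kappa> J f x \<le> 0"
proof -
  obtain l where l: "((\<lambda>\<epsilon>. Lop c \<kappa> J \<epsilon> f x) \<longlongrightarrow> l) (at_right 0)"
    using wd unfolding Lweak_wd_def by blast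
  have "\<forall>\<^sub>F \<epsilon> in at_right 0. Lop c \<kappa> J \<epsilon> f x \<le> 0"
    using eventually_at_right_real[of 0 1, OF zero_less_one]
  proof (rule eventually_mono)
    fix \<epsilon> :: real assume "\<epsilon> \<in> {0<..<1}"
    then have "c = P1 \<Longrightarrow> f differentiable (at x)"
      using wd unfolding Lweak_wd_def Lop_wd_def by auto
    then show "Lop c \<kappa> J \<epsilon> f x \<le> 0" using Lop_nonpos_at_max max \<kappa>_nonneg by blast
  qed
  then have "l \<le> 0" by (rule tendsto_upperbound[OF l]) simp
  then show ?thesis using Lweak_eq_limit[OF l] by simp
qed

lemma Lintegrand_diff:
  assumes "c = P1 \<Longrightarrow> f differentiable (at x)" "c = P1 \<Longrightarrow> g differentiable (at x)"
  shows "Lintegrand c \<kappa> J \<epsilon> (\<lambda>y. f y - g y) x z = Lintegrand c \<kappa> J \<epsilon> f x z - Lintegrand c \<kappa> J \<epsilon> g x z"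
proof (cases c)
  case P1
  have "((\<lambda>y. f y - g y) has_derivative
      (\<lambda>v. frechet_derivative f (at x) v - frechet_derivative g (at x) v)) (at x)"
    using assms P1 frechet_derivative_works by (intro has_derivative_diff) auto
  then have "frechet_derivative (\<lambda>y. f y - g y) (at x)
      = (\<lambda>v. frechet_derivative f (at x) v - frechet_derivative g (at x) v)"
    using frechet_derivative_at by metis
  then show ?thesis using P1 unfolding Lintegrand_def by (simp add: algebra_simps)
qed (simp_all add: Lintegrand_def algebra_simps)

lemma Lop_diff:
  assumes f: "Lop_wd c \<kappa> J \<epsilon> f x" and g: "Lop_wd c \<kappa> J \<epsilon> g x"
  shows "Lop_wd c \<kappa> J \<epsilon> (\<lambda>y. f y - g y) x"
    and "Lop c \<kappa> J \<epsilon> (\<lambda>y. f y - g y) x = Lop c \<kappa> J \<epsilon> f x - Lop c \<kappa> J \<epsilon> g x"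
proof -
  have "Lintegrand c \<kappa> J \<epsilon> (\<lambda>y. f y - g y) x
      = (\<lambda>z. Lintegrand c \<kappa> J \<epsilon> f x z - Lintegrand c \<kappa> J \<epsilon> g x z)"
    using f g by (intro ext Lintegrand_diff) (auto simp: Lop_wd_def)
  then show "Lop_wd c \<kappa> J \<epsilon> (\<lambda>y. f y - g y) x"
    and "Lop c \<kappa> J \<epsilon> (\<lambda>y. f y - g y) x = Lop c \<kappa> J \<epsilon> f x - Lop c \<kappa> J \<epsilon> g x"
    using f g by (auto simp: Lop_wd_def Lop_def intro: differentiable_diff)
qed

lemma Lweak_diff:
  assumes f: "Lweak_wd c \<kappa> J f x" and g: "Lweak_wd c \<kappa> J g x"
  shows "Lweak_wd c \<kappa> J (\<lambda>y. f y - g y) x"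
    and "Lweak c \<kappa> J (\<lambda>y. f y - g y) x = Lweak c \<kappa> J f x - Lweak c \<kappa> J g x"
proof -
  obtain l1 where l1: "((\<lambda>\<epsilon>. Lop c \<kappa> J \<epsilon> f x) \<longlongrightarrow> l1) (at_right 0)"
    using f unfolding Lweak_wd_def by blast
  obtain l2 where l2: "((\<lambda>\<epsilon>. Lop c \<kappa> J \<epsilon> g x) \<longlongrightarrow> l2) (at_right 0)"
    using g unfolding Lweak_wd_def by blast
  have wd: "Lop_wd c \<kappa> J \<epsilon> (\<lambda>y. f y - g y) x"
    and eq: "Lop c \<kappa> J \<epsilon> (\<lambda>y. f y - g y) x = Lop c \<kappa> J \<epsilon> f x - Lop c \<kappa> J \<epsilon> g x"
    if "0 < \<epsilon>" "\<epsilon> \<le> 1" for \<epsilon>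
    using f g that Lop_diff unfolding Lweak_wd_def by blast+
  have "\<forall>\<^sub>F \<epsilon> in at_right 0. Lop c \<kappa> J \<epsilon> f x - Lop c \<kappa> J \<epsilon> g x = Lop c \<kappa> J \<epsilon> (\<lambda>y. f y - g y) x"
    using eventually_at_right_real[of 0 1, OF zero_less_one] by eventually_elim (simp add: eq)
  with tendsto_diff[OF l1 l2]
  have lim: "((\<lambda>\<epsilon>. Lop c \<kappa> J \<epsilon> (\<lambda>y. f y - g y) x) \<longlongrightarrow> l1 - l2) (at_right 0)"
    by (rule Lim_transform_eventually)
  show "Lweak_wd c \<kappa> J (\<lambda>y. f y - g y) x"
    unfolding Lweak_wd_def using wd lim by blast
  show "Lweak c \<kappa> J (\<lambda>y. f y - g y) x = Lweak c \<kappa> J f x - Lweak c \<kappa> J g x"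
    using Lweak_eq_limit[OF lim] Lweak_eq_limit[OF l1] Lweak_eq_limit[OF l2] by simp
qed

lemma is_solution_diff:
  assumes u1: "is_solution c \<kappa> J T u1" and u2: "is_solution c \<kappa> J T u2"
  shows "is_solution c \<kappa> J T (\<lambda>t x. u1 t x - u2 t x)"
proof -
  have cont: "continuous_on ({0..T} \<times> UNIV) (\<lambda>(t, x). u1 t x - u2 t x)"
    using u1 u2 unfolding is_solution_def case_prod_beta by (intro continuous_on_diff) auto
  have initial: "\<exists>\<delta>>0. \<forall>t. 0 < t \<and> t < \<delta> \<longrightarrow> (\<forall>x. \<bar>u1 t x - u2 t x - (u1 0 x - u2 0 x)\<bar> \<le> e)"
    if "0 < e" for e
  proof -
    obtain \<delta>1 where "0 < \<delta>1" and \<delta>1: "\<And>t x. 0 < t \<Longrightarrow> t < \<delta>1 \<Longrightarrow> \<bar>u1 t x - u1 0 x\<bar> \<le> e / 2"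
      using u1 \<open>0 < e\<close> unfolding is_solution_def by (meson half_gt_zero)
    obtain \<delta>2 where "0 < \<delta>2" and \<delta>2: "\<And>t x. 0 < t \<Longrightarrow> t < \<delta>2 \<Longrightarrow> \<bar>u2 t x - u2 0 x\<bar> \<le> e / 2"
      using u2 \<open>0 < e\<close> unfolding is_solution_def by (meson half_gt_zero)
    have "\<bar>u1 t x - u2 t x - (u1 0 x - u2 0 x)\<bar> \<le> e" if "0 < t" "t < min \<delta>1 \<delta>2" for t x
    proof -
      have "\<bar>u1 t x - u1 0 x\<bar> \<le> e / 2" "\<bar>u2 t x - u2 0 x\<bar> \<le> e / 2"
        using \<delta>1 \<delta>2 that by auto
      then show ?thesis by arith
    qed
    then show ?thesis using \<open>0 < \<delta>1\<close> \<open>0 < \<delta>2\<close> by (intro exI[of _ "min \<delta>1 \<delta>2"]) auto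
  qed
  have decay: "\<exists>R. \<forall>t\<in>{0..T}. \<forall>x. R \<le> norm x \<longrightarrow> \<bar>u1 t x - u2 t x\<bar> \<le> e" if "0 < e" for e
  proof -
    obtain R1 where R1: "\<And>t x. t \<in> {0..T} \<Longrightarrow> R1 \<le> norm x \<Longrightarrow> \<bar>u1 t x\<bar> \<le> e / 2"
      using u1 \<open>0 < e\<close> unfolding is_solution_def by (meson half_gt_zero)
    obtain R2 where R2: "\<And>t x. t \<in> {0..T} \<Longrightarrow> R2 \<le> norm x \<Longrightarrow> \<bar>u2 t x\<bar> \<le> e / 2"
      using u2 \<open>0 < e\<close> unfolding is_solution_def by (meson half_gt_zero)
    have "\<bar>u1 t x - u2 t x\<bar> \<le> e" if "t \<in> {0..T}" "max R1 R2 \<le> norm x" for t x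
    proof -
      have "\<bar>u1 t x\<bar> \<le> e / 2" "\<bar>u2 t x\<bar> \<le> e / 2" using R1 R2 that by auto
      then show ?thesis by arith
    qed
    then show ?thesis by blast
  qed
  have equation: "Lweak_wd c \<kappa> J (\<lambda>x. u1 t x - u2 t x) x \<and>
      ((\<lambda>s. u1 s x - u2 s x) has_real_derivative Lweak c \<kappa> J (\<lambda>x. u1 t x - u2 t x) x)
        (at t within {0..T})"
    if "t \<in> {0<..T}" for t x
  proof -
    have wd1: "Lweak_wd c \<kappa> J (u1 t) x"
      and d1: "((\<lambda>s. u1 s x) has_real_derivative Lweak c \<kappa> J (u1 t) x) (at t within {0..T})"
      and wd2: "Lweak_wd c \<kappa> J (u2 t) x"
      and d2: "((\<lambda>s. u2 s x) has_real_derivative Lweak c \<kappa> J (u2 t) x) (at t within {0..T})"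
      using u1 u2 that unfolding is_solution_def by blast+
    show ?thesis using Lweak_diff[OF wd1 wd2] DERIV_diff[OF d1 d2] by simp
  qed
  show ?thesis unfolding is_solution_def using cont initial decay equation by blast
qed

lemma bdd_above_slice:
  fixes u :: "real \<Rightarrow> 'a::euclidean_space \<Rightarrow> real"
  assumes cont: "continuous_on ({0..T} \<times> UNIV) (\<lambda>(t, x). u t x)"
    and decay: "\<forall>e>0. \<exists>R. \<forall>t\<in>{0..T}. \<forall>x. R \<le> norm x \<longrightarrow> \<bar>u t x\<bar> \<le> e"
    and t: "t \<in> {0..T}"
  shows "bdd_above (range (u t))"
proof -
  obtain R where R: "\<And>x. R \<le> norm x \<Longrightarrow> \<bar>u t x\<bar> \<le> 1"
    using decay t by (meson zero_less_one)
  have "continuous_on (cball 0 R) (\<lambda>x. (\<lambda>(t, x). u t x) (t, x))"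
    using t by (intro continuous_on_compose2[OF cont] continuous_intros) auto
  then have "compact (u t ` cball 0 R)"
    by (intro compact_continuous_image) auto
  then obtain B where B: "\<And>x. x \<in> cball 0 R \<Longrightarrow> u t x \<le> B"
    using bounded_has_Sup(1)[OF compact_imp_bounded] by blast
  have "u t x \<le> max 1 B" for x
    using R[of x] B[of x] by (cases "R \<le> norm x") auto
  then show ?thesis by (intro bdd_aboveI[of _ "max 1 B"]) auto
qed

lemma continuous_attains_sup_cylinder:
  fixes g :: "'b::metric_space \<times> 'a::euclidean_space \<Rightarrow> real"
  assumes "compact K" and cont: "continuous_on (K \<times> UNIV) g"
    and decay: "\<forall>e>0. \<exists>R. \<forall>r\<in>K. \<forall>x. R \<le> norm x \<longrightarrow> g (r, x) \<le> e"
    and p0: "p0 \<in> K \<times> UNIV" "0 < g p0"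
  obtains p where "p \<in> K \<times> UNIV" "\<And>q. q \<in> K \<times> UNIV \<Longrightarrow> g q \<le> g p"
proof -
  obtain R where R: "\<And>r x. r \<in> K \<Longrightarrow> R \<le> norm x \<Longrightarrow> g (r, x) \<le> g p0 / 2"
    using decay p0(2) by (meson half_gt_zero)
  define C where "C = K \<times> cball (0::'a) (max R (norm (snd p0)))"
  have "p0 \<in> C" using p0(1) by (auto simp: C_def mem_Times_iff)
  moreover have "compact C" unfolding C_def using \<open>compact K\<close> by (intro compact_Times) auto
  moreover have "continuous_on C g" using cont by (rule continuous_on_subset) (auto simp: C_def)
  ultimately have "\<exists>p\<in>C. \<forall>q\<in>C. g q \<le> g p"
    by (intro continuous_attains_sup) auto
  then obtain p where p: "p \<in> C" "\<And>q. q \<in> C \<Longrightarrow> g q \<le> g p" by blast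
  show ?thesis
  proof
    show "p \<in> K \<times> UNIV" using p(1) by (auto simp: C_def)
    fix q :: "'b \<times> 'a" assume q: "q \<in> K \<times> UNIV"
    show "g q \<le> g p"
    proof (cases "q \<in> C")
      case False
      then have "g q \<le> g p0 / 2" using q R[of "fst q" "snd q"] by (auto simp: C_def mem_Times_iff)
      then show ?thesis using p(2)[OF \<open>p0 \<in> C\<close>] p0(2) by simp
    qed (rule p(2))
  qed
qed

lemma has_real_derivative_ge_left_slope:
  assumes deriv: "(f has_real_derivative D) (at s within S)" and "{a..s} \<subseteq> S" "a < s"
    and slope: "\<And>r. a < r \<Longrightarrow> r < s \<Longrightarrow> f r - \<eta> * r \<le> f s - \<eta> * s"
  shows "\<eta> \<le> D"
proof -
  have "(f has_real_derivative D) (at s within {a..s})"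
    using deriv \<open>{a..s} \<subseteq> S\<close> by (rule has_field_derivative_subset)
  then have lim: "((\<lambda>r. (f r - f s) / (r - s)) \<longlongrightarrow> D) (at_left s)"
    unfolding has_field_derivative_iff at_within_Icc_at_left[OF \<open>a < s\<close>] .
  have "\<forall>\<^sub>F r in at_left s. \<eta> \<le> (f r - f s) / (r - s)"
    using eventually_at_left_real[OF \<open>a < s\<close>]
  proof (rule eventually_mono)
    fix r assume r: "r \<in> {a<..<s}"
    then have "\<eta> * (s - r) \<le> f s - f r" using slope[of r] by (simp add: algebra_simps)
    then have "\<eta> \<le> (f s - f r) / (s - r)" using r by (simp add: pos_le_divide_eq)
    then show "\<eta> \<le> (f r - f s) / (r - s)" by (metis minus_diff_eq minus_divide_divide)
  qed
  then show ?thesis by (rule tendsto_lowerbound[OF lim]) simp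
qed

lemma maximum_principle:
  fixes u :: "real \<Rightarrow> 'a::euclidean_space \<Rightarrow> real"
  assumes cont: "continuous_on ({0..T} \<times> UNIV) (\<lambda>(t, x). u t x)"
    and decay: "\<forall>e>0. \<exists>R. \<forall>t\<in>{0..T}. \<forall>x. R \<le> norm x \<longrightarrow> \<bar>u t x\<bar> \<le> e"
    and deriv_at_max: "\<And>s x. s \<in> {0<..T} \<Longrightarrow> (\<And>y. u s y \<le> u s x) \<Longrightarrow>
              \<exists>D. ((\<lambda>r. u r x) has_real_derivative D) (at s within {0..T}) \<and> D \<le> 0"
    and M_nonneg: "0 \<le> (SUP x. u 0 x)"
    and t: "t \<in> {0<..T}"
  shows "u t x0 \<le> (SUP x. u 0 x)"
proof (rule ccontr)
  define M where "M = (SUP x. u 0 x)"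
  have u0_le: "u 0 x \<le> M" for x
    unfolding M_def using t by (intro cSUP_upper bdd_above_slice[OF cont decay]) auto
  assume "\<not> u t x0 \<le> (SUP x. u 0 x)"
  then have "M < u t x0" unfolding M_def by simp
  define \<eta> where "\<eta> = (u t x0 - M) / (2 * t)"
  define g where "g = (\<lambda>(r, x). u r x - \<eta> * r)"
  have "0 < \<eta>" unfolding \<eta>_def using \<open>M < u t x0\<close> t by simp
  have g_t_x0: "M < g (t, x0)"
    using \<open>M < u t x0\<close> t by (simp add: g_def \<eta>_def field_simps)
  have "continuous_on ({0..t} \<times> UNIV) g"
    unfolding g_def case_prod_beta using t
    by (intro continuous_intros continuous_on_subset[OF cont[unfolded case_prod_beta]]) auto
  moreover have "\<forall>e>0. \<exists>R. \<forall>r\<in>{0..t}. \<forall>x. R \<le> norm x \<longrightarrow> g (r, x) \<le> e"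
  proof (intro allI impI)
    fix e :: real assume "0 < e"
    then obtain R where R: "\<forall>r\<in>{0..T}. \<forall>x. R \<le> norm x \<longrightarrow> \<bar>u r x\<bar> \<le> e"
      using decay by blast
    have "g (r, x) \<le> e" if "r \<in> {0..t}" "R \<le> norm x" for r x
    proof -
      have "\<bar>u r x\<bar> \<le> e" using R t that by auto
      moreover have "0 \<le> \<eta> * r" using \<open>0 < \<eta>\<close> that by simp
      ultimately show ?thesis by (simp add: g_def)
    qed
    then show "\<exists>R. \<forall>r\<in>{0..t}. \<forall>x. R \<le> norm x \<longrightarrow> g (r, x) \<le> e" by blast
  qed
  moreover have "(t, x0) \<in> {0..t} \<times> UNIV" "0 < g (t, x0)"
    using t g_t_x0 M_nonneg unfolding M_def by auto
  ultimately obtain p where p: "p \<in> {0..t} \<times> UNIV" "\<And>q. q \<in> {0..t} \<times> UNIV \<Longrightarrow> g q \<le> g p"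
    by (rule continuous_attains_sup_cylinder[OF compact_Icc]) blast
  obtain s y where p_eq: "p = (s, y)" by (cases p)
  have s: "s \<in> {0..t}" using p(1) unfolding p_eq by simp
  have g_max: "g (r, x) \<le> g (s, y)" if "r \<in> {0..t}" for r x
    using p(2)[of "(r, x)"] that unfolding p_eq by simp
  have "0 < s"
  proof (rule ccontr)
    assume "\<not> 0 < s"
    then have "g (s, y) \<le> M" using s u0_le[of y] by (simp add: g_def)
    then show False using g_max[of t x0] g_t_x0 t by simp
  qed
  have "u s x \<le> u s y" for x using g_max[OF s, of x] by (simp add: g_def)
  then obtain D where D: "((\<lambda>r. u r y) has_real_derivative D) (at s within {0..T})" "D \<le> 0"
    using deriv_at_max[of s y] \<open>0 < s\<close> s t by auto
  have "u r y - \<eta> * r \<le> u s y - \<eta> * s" if "0 < r" "r < s" for r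
    using g_max[of r y] that s by (simp add: g_def)
  moreover have "{0..s} \<subseteq> {0..T}" using s t by auto
  ultimately have "\<eta> \<le> D"
    using has_real_derivative_ge_left_slope[OF D(1) _ \<open>0 < s\<close>] by blast
  then show False using D(2) \<open>0 < \<eta>\<close> by simp
qed

lemma is_solution_le_initial_sup:
  assumes \<kappa>_nonneg: "\<And>x z. 0 \<le> \<kappa> x z" and u: "is_solution c \<kappa> J T u"
    and "0 \<le> (SUP x. u 0 x)" and "t \<in> {0<..T}"
  shows "u t x \<le> (SUP x. u 0 x)"
proof (rule maximum_principle[where T = T and u = u, OF _ _ _ assms(3,4)])
  fix s y assume s: "s \<in> {0<..T}" and max: "\<And>z. u s z \<le> u s y"
  have wd: "Lweak_wd c \<kappa> J (u s) y"
    and deriv: "((\<lambda>r. u r y) has_real_derivative Lweak c \<kappa> J (u s) y) (at s within {0..T})"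
    using u s unfolding is_solution_def by blast+
  then show "\<exists>D. ((\<lambda>r. u r y) has_real_derivative D) (at s within {0..T}) \<and> D \<le> 0"
    using Lweak_nonpos_at_max[OF wd max \<kappa>_nonneg] by blast
qed (use u in \<open>auto simp: is_solution_def\<close>)

lemma is_solution_unique:
  assumes \<kappa>_nonneg: "\<And>x z. 0 \<le> \<kappa> x z"
    and u1: "is_solution c \<kappa> J T u1" and u2: "is_solution c \<kappa> J T u2"
    and init: "u1 0 = u2 0" and t: "t \<in> {0..T}"
  shows "u1 t x = u2 t x"
proof (cases "t = 0")
  case False
  then have t: "t \<in> {0<..T}" using t by simp
  have "u1 t x - u2 t x \<le> 0"
    using is_solution_le_initial_sup[OF \<kappa>_nonneg is_solution_diff[OF u1 u2] _ t] init by simp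
  moreover have "u2 t x - u1 t x \<le> 0"
    using is_solution_le_initial_sup[OF \<kappa>_nonneg is_solution_diff[OF u2 u1] _ t] init by simp
  ultimately show ?thesis by simp
qed (use init in simp)

theorem theorem4p1:
  fixes \<nu> :: "real \<Rightarrow> ennreal" and J :: "'a::euclidean_space \<Rightarrow> ennreal"
    and \<kappa> :: "'a \<Rightarrow> 'a \<Rightarrow> real" and \<Lambda> \<kappa>0 \<kappa>1 \<kappa>2 \<beta> T :: real and c :: pcase
  assumes \<nu>_mono: "\<And>r s. 0 \<le> r \<Longrightarrow> r \<le> s \<Longrightarrow> \<nu> s \<le> \<nu> r"
    and \<nu>_int: "(\<integral>\<^sup>+ x. ennreal (min 1 (norm (x::'a)^2)) * \<nu> (norm x) \<partial>lborel) < \<infinity>"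
    and J_meas: "J \<in> borel_measurable borel"
    and \<Lambda>: "1 \<le> \<Lambda>"
    and J_lower: "\<And>x. ennreal (1 / \<Lambda>) * \<nu> (norm x) \<le> J x"
    and J_upper: "\<And>x. J x \<le> ennreal \<Lambda> * \<nu> (norm x)"
    and \<kappa>_meas: "(\<lambda>p. \<kappa> (fst p) (snd p)) \<in> borel_measurable borel"
    and \<kappa>0: "0 < \<kappa>0"
    and \<kappa>_bounds: "\<And>x z. \<kappa>0 \<le> \<kappa> x z \<and> \<kappa> x z \<le> \<kappa>1"
    and \<kappa>_hoelder: "\<And>x y z. \<bar>\<kappa> x z - \<kappa> y z\<bar> \<le> \<kappa>2 * norm (x - y) powr \<beta>"
    and \<beta>: "0 < \<beta>" "\<beta> < 1"
    and P: "case_hyp c \<nu> J \<kappa>"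
    and T: "0 < T"
  shows "(\<forall>u. is_solution c \<kappa> J T u \<longrightarrow> (SUP x. u 0 x) \<ge> 0 \<longrightarrow>
            (\<forall>t\<in>{0<..T}. (SUP x. u t x) \<le> (SUP x. u 0 x)))
       \<and> (\<forall>u1 u2. is_solution c \<kappa> J T u1 \<longrightarrow> is_solution c \<kappa> J T u2 \<longrightarrow> u1 0 = u2 0 \<longrightarrow>
            (\<forall>t\<in>{0..T}. \<forall>x. u1 t x = u2 t x))"
proof -
  have \<kappa>_nonneg: "\<And>x z. 0 \<le> \<kappa> x z" using \<kappa>_bounds \<kappa>0 by (meson less_le_trans less_imp_le)
  show ?thesis
  proof (intro conjI allI impI ballI)
    fix u :: "real \<Rightarrow> 'a \<Rightarrow> real" and t
    assume "is_solution c \<kappa> J T u" "0 \<le> (SUP x. u 0 x)" "t \<in> {0<..T}"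
    then show "(SUP x. u t x) \<le> (SUP x. u 0 x)"
      by (intro cSUP_least is_solution_le_initial_sup[OF \<kappa>_nonneg]) auto
  qed (rule is_solution_unique[OF \<kappa>_nonneg]; assumption)+
qed

end
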